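(* For every $D \in \Omega_n$, $$ \big( \|D\|_{\mathcal{S}_2}^2 + n - 2 \big)^{1/2} \le r_{\mathcal{S}_2}(D) \le \big( \|D\|_{\mathcal{S}_2}^2 + n \big)^{1/2}. $$ Moreover, $\sup_{D\in\Omega_n}\Big| \dfrac{r_{\mathcal{S}_2}(D)^2}{\|D\|_{\mathcal{S}_2}^2 + n} - 1\Big| \to 0$ as $n\to\infty$.
   Context: $\Omega_n$ denotes the set of $n\times n$ doubly stochastic matrices (nonnegative real entries, all row and column sums equal to $1$). $\|\cdot\|_{\mathcal{S}_2}$ is the Frobenius norm $\|A\|_{\mathcal{S}_2}=\big(\sum_{i,j}a_{ij}^2\big)^{1/2}$. For $A\in M_n(\mathbb{R})$, $r_{\mathcal{S}_2}(A) := \max_{B\in\Omega_n}\|A-B\|_{\mathcal{S}_2}$ is the minimal radius of a bounding ball of $\Omega_n$ centered at $A$. *)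

theory Defs
  imports "HOL-Analysis.Analysis"
begin

text \<open>n x n real matrices are represented as functions nat => nat => real,
  only the entries with indices below n are relevant.\<close>

definition doubly_stochastic :: "nat \<Rightarrow> (nat \<Rightarrow> nat \<Rightarrow> real) \<Rightarrow> bool" where
  "doubly_stochastic n A \<longleftrightarrow>
     (\<forall>i<n. \<forall>j<n. 0 \<le> A i j) \<and>
     (\<forall>i<n. (\<Sum>j<n. A i j) = 1) \<and>
     (\<forall>j<n. (\<Sum>i<n. A i j) = 1)"

definition Omega :: "nat \<Rightarrow> (nat \<Rightarrow> nat \<Rightarrow> real) set" where
  "Omega n = {A. doubly_stochastic n A}"

definition frob :: "nat \<Rightarrow> (nat \<Rightarrow> nat \<Rightarrow> real) \<Rightarrow> real" where
  "frob n A = sqrt (\<Sum>i<n. \<Sum>j<n. (A i j)\<^sup>2)"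

text \<open>Minimal radius of a bounding ball of Omega n centred at A (the max is attained
  by compactness; we write it as a supremum).\<close>
definition r_S2 :: "nat \<Rightarrow> (nat \<Rightarrow> nat \<Rightarrow> real) \<Rightarrow> real" where
  "r_S2 n A = (SUP B\<in>Omega n. frob n (\<lambda>i j. A i j - B i j))"

end

theory Submission
  imports Defs
begin

text \<open>For any B in Omega n the entries lie in [0,1] and sum to n, so expanding the square
  gives \<open>\<parallel>D - B\<parallel>\<^sup>2 \<le> \<parallel>D\<parallel>\<^sup>2 + \<Sum>B = \<parallel>D\<parallel>\<^sup>2 + n\<close>. Conversely, for the cyclic permutation matrices
  \<open>P\<^sub>k\<close> one has \<open>\<parallel>D - P\<^sub>k\<parallel>\<^sup>2 = \<parallel>D\<parallel>\<^sup>2 - 2 \<langle>D, P\<^sub>k\<rangle> + n\<close>, and since the \<open>P\<^sub>k\<close> for \<open>k < n\<close> sum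
  to the all-ones matrix, the n numbers \<open>\<langle>D, P\<^sub>k\<rangle>\<close> add up to n; one of them is at most 1.
  Both bounds on the squared radius differ by 2, which is negligible against \<open>\<parallel>D\<parallel>\<^sup>2 + n \<ge> n\<close>.\<close>

lemma mod_add_mod_add_eq_self:
  fixes i a b n :: nat
  assumes "i < n" "(a + b) mod n = 0"
  shows "((i + a) mod n + b) mod n = i"
proof -
  have "((i + a) mod n + b) mod n = (i + (a + b) mod n) mod n"
    by (metis add.assoc mod_add_left_eq mod_add_right_eq)
  then show ?thesis using assms by simp
qed

lemma add_minus_mod_self_mod:
  fixes k n :: nat
  assumes "0 < n"
  shows "(k + (n - k mod n)) mod n = 0"
proof -
  have "k div n * n + k mod n = k" "k mod n < n"
    using assms by simp_all
  then have "k + (n - k mod n) = (k div n + 1) * n"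
    unfolding distrib_right by linarith
  then show ?thesis by simp
qed

lemma sum_lessThan_shift_mod:
  fixes f :: "nat \<Rightarrow> 'a::comm_monoid_add"
  shows "(\<Sum>i<n. f ((i + k) mod n)) = (\<Sum>j<n. f j)"
proof (rule sum.reindex_bij_witness[of _ "\<lambda>j. (j + (n - k mod n)) mod n" "\<lambda>i. (i + k) mod n"])
  fix i assume "i \<in> {..<n}"
  then show "((i + k) mod n + (n - k mod n)) mod n = i"
    by (intro mod_add_mod_add_eq_self add_minus_mod_self_mod) auto
next
  fix j assume "j \<in> {..<n}"
  then show "((j + (n - k mod n)) mod n + k) mod n = j"
    using add_minus_mod_self_mod[of n k] by (intro mod_add_mod_add_eq_self) (auto simp: add.commute)
qed auto

lemma OmegaD:
  assumes "B \<in> Omega n"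
  shows Omega_nonneg: "\<And>i j. i < n \<Longrightarrow> j < n \<Longrightarrow> 0 \<le> B i j"
    and Omega_row_sum: "\<And>i. i < n \<Longrightarrow> (\<Sum>j<n. B i j) = 1"
  using assms by (auto simp: Omega_def doubly_stochastic_def)

lemma Omega_le_1:
  assumes B: "B \<in> Omega n" and "i < n" "j < n"
  shows "B i j \<le> 1"
proof -
  have "B i j \<le> (\<Sum>j<n. B i j)"
    by (rule member_le_sum) (use assms Omega_nonneg[OF B] in auto)
  then show ?thesis using Omega_row_sum[OF B \<open>i < n\<close>] by simp
qed

definition cyclic_perm :: "nat \<Rightarrow> nat \<Rightarrow> nat \<Rightarrow> nat \<Rightarrow> real" where
  "cyclic_perm n k i j = (if j = (i + k) mod n then 1 else 0)"

lemma cyclic_perm_in_Omega: "cyclic_perm n k \<in> Omega n"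
proof -
  have "(\<Sum>i<n. cyclic_perm n k i j) = 1" if "j < n" for j
  proof -
    have "(\<Sum>i<n. cyclic_perm n k i j) = (\<Sum>i<n. (\<lambda>l. if j = l then 1 else 0::real) ((i + k) mod n))"
      by (simp add: cyclic_perm_def)
    also have "\<dots> = (\<Sum>l<n. if j = l then 1 else 0)"
      by (rule sum_lessThan_shift_mod)
    also have "\<dots> = 1"
      using that by simp
    finally show ?thesis .
  qed
  moreover have "(\<Sum>j<n. cyclic_perm n k i j) = 1" if "i < n" for i
    using that by (simp add: cyclic_perm_def sum.delta)
  ultimately show ?thesis
    by (auto simp: Omega_def doubly_stochastic_def cyclic_perm_def)
qed

lemma Omega_nonempty: "Omega n \<noteq> {}"
  using cyclic_perm_in_Omega by blast

lemma frob_nonneg: "0 \<le> frob n A"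
  unfolding frob_def by (simp add: sum_nonneg)

lemma power2_frob: "(frob n A)\<^sup>2 = (\<Sum>i<n. \<Sum>j<n. (A i j)\<^sup>2)"
  unfolding frob_def by (simp add: sum_nonneg)

lemma power2_frob_diff_le:
  assumes D: "\<And>i j. i < n \<Longrightarrow> j < n \<Longrightarrow> 0 \<le> D i j" and B: "B \<in> Omega n"
  shows "(frob n (\<lambda>i j. D i j - B i j))\<^sup>2 \<le> (frob n D)\<^sup>2 + real n"
proof -
  have entry: "(D i j - B i j)\<^sup>2 \<le> (D i j)\<^sup>2 + B i j" if "i < n" "j < n" for i j
  proof -
    have "B i j * B i j \<le> B i j"
      using Omega_le_1[OF B that] Omega_nonneg[OF B that] by (simp add: mult_left_le)
    moreover have "0 \<le> D i j * B i j"
      using D[OF that] Omega_nonneg[OF B that] by simp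
    ultimately show ?thesis by (simp add: power2_eq_square algebra_simps)
  qed
  have "(\<Sum>i<n. \<Sum>j<n. (D i j - B i j)\<^sup>2) \<le> (\<Sum>i<n. \<Sum>j<n. (D i j)\<^sup>2 + B i j)"
    by (intro sum_mono) (simp add: entry)
  also have "\<dots> = (\<Sum>i<n. \<Sum>j<n. (D i j)\<^sup>2) + real n"
    by (simp add: sum.distrib Omega_row_sum[OF B])
  finally show ?thesis by (simp add: power2_frob)
qed

lemma power2_frob_diff_cyclic_perm:
  "(frob n (\<lambda>i j. D i j - cyclic_perm n k i j))\<^sup>2
     = (frob n D)\<^sup>2 - 2 * (\<Sum>i<n. D i ((i + k) mod n)) + real n"
proof -
  have row: "(\<Sum>j<n. (D i j - cyclic_perm n k i j)\<^sup>2)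
      = (\<Sum>j<n. (D i j)\<^sup>2) + (1 - 2 * D i ((i + k) mod n))" if "i < n" for i
  proof -
    have "(\<Sum>j<n. (D i j - cyclic_perm n k i j)\<^sup>2)
        = (\<Sum>j<n. (D i j)\<^sup>2 + (if j = (i + k) mod n then 1 - 2 * D i j else 0))"
      by (intro sum.cong) (auto simp: cyclic_perm_def power2_eq_square algebra_simps)
    also have "\<dots> = (\<Sum>j<n. (D i j)\<^sup>2) + (1 - 2 * D i ((i + k) mod n))"
      using that by (simp add: sum.distrib sum.delta')
    finally show ?thesis .
  qed
  show ?thesis
    by (simp add: power2_frob row sum.distrib sum_subtractf sum_distrib_left)
qed

lemma ex_cyclic_diagonal_sum_le_1:
  fixes n :: nat
  assumes rows: "\<And>i. i < n \<Longrightarrow> (\<Sum>j<n. D i j) = 1" and "n \<ge> 1"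
  shows "\<exists>k<n. (\<Sum>i<n. D i ((i + k) mod n)) \<le> (1::real)"
proof (rule ccontr)
  assume "\<not> ?thesis"
  then have gt: "1 < (\<Sum>i<n. D i ((i + k) mod n))" if "k < n" for k
    using that by auto
  have "(\<Sum>k<n. 1) < (\<Sum>k<n. \<Sum>i<n. D i ((i + k) mod n))"
    using \<open>n \<ge> 1\<close> gt by (intro sum_strict_mono) (auto simp: lessThan_empty_iff)
  also have "\<dots> = (\<Sum>i<n. \<Sum>k<n. D i ((k + i) mod n))"
    by (subst sum.swap) (simp add: add.commute)
  also have "\<dots> = real n"
    by (simp add: sum_lessThan_shift_mod rows)
  finally show False by simp
qed

lemma frob_diff_le:
  assumes D: "D \<in> Omega n" and B: "B \<in> Omega n"
  shows "frob n (\<lambda>i j. D i j - B i j) \<le> sqrt ((frob n D)\<^sup>2 + real n)"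
proof (rule real_le_rsqrt)
  show "(frob n (\<lambda>i j. D i j - B i j))\<^sup>2 \<le> (frob n D)\<^sup>2 + real n"
    by (rule power2_frob_diff_le[OF _ B]) (rule Omega_nonneg[OF D])
qed

lemma le_r_S2:
  assumes D: "D \<in> Omega n" and B: "B \<in> Omega n"
  shows "frob n (\<lambda>i j. D i j - B i j) \<le> r_S2 n D"
proof -
  have "bdd_above ((\<lambda>B. frob n (\<lambda>i j. D i j - B i j)) ` Omega n)"
    by (rule bdd_aboveI2) (rule frob_diff_le[OF D])
  then show ?thesis
    unfolding r_S2_def by (rule cSUP_upper[OF B])
qed

lemma r_S2_le:
  assumes D: "D \<in> Omega n"
  shows "r_S2 n D \<le> sqrt ((frob n D)\<^sup>2 + real n)"
  unfolding r_S2_def by (rule cSUP_least[OF Omega_nonempty]) (rule frob_diff_le[OF D])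

lemma r_S2_ge:
  assumes D: "D \<in> Omega n" and "n \<ge> 1"
  shows "sqrt ((frob n D)\<^sup>2 + real n - 2) \<le> r_S2 n D"
proof -
  obtain k where "(\<Sum>i<n. D i ((i + k) mod n)) \<le> 1"
    using ex_cyclic_diagonal_sum_le_1[of n D] Omega_row_sum[OF D] \<open>n \<ge> 1\<close> by blast
  then have "(frob n D)\<^sup>2 + real n - 2 \<le> (frob n (\<lambda>i j. D i j - cyclic_perm n k i j))\<^sup>2"
    by (simp add: power2_frob_diff_cyclic_perm)
  then have "sqrt ((frob n D)\<^sup>2 + real n - 2) \<le> frob n (\<lambda>i j. D i j - cyclic_perm n k i j)"
    by (rule real_le_lsqrt[OF frob_nonneg])
  also have "\<dots> \<le> r_S2 n D"
    by (rule le_r_S2[OF D cyclic_perm_in_Omega])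
  finally show ?thesis .
qed

lemma r_S2_nonneg: "D \<in> Omega n \<Longrightarrow> 0 \<le> r_S2 n D"
  using frob_nonneg le_r_S2 cyclic_perm_in_Omega order_trans by blast

lemma abs_divide_minus_1_le:
  fixes x y c e :: real
  assumes "0 < c" "c \<le> y" "\<bar>x - y\<bar> \<le> e"
  shows "\<bar>x / y - 1\<bar> \<le> e / c"
proof -
  have "x / y - 1 = (x - y) / y"
    using assms by (simp add: diff_divide_distrib)
  then have "\<bar>x / y - 1\<bar> = \<bar>x - y\<bar> / y"
    using assms by (simp add: abs_divide)
  also have "\<dots> \<le> e / y"
    using assms by (simp add: divide_right_mono)
  also have "\<dots> \<le> e / c"
    using assms by (intro divide_left_mono) auto
  finally show ?thesis .
qed

lemma abs_SUP_abs_le: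
  fixes f :: "'a \<Rightarrow> real"
  assumes "A \<noteq> {}" and le: "\<And>x. x \<in> A \<Longrightarrow> \<bar>f x\<bar> \<le> c"
  shows "\<bar>SUP x\<in>A. \<bar>f x\<bar>\<bar> \<le> c"
proof -
  obtain x where x: "x \<in> A" using assms by blast
  have "bdd_above ((\<lambda>x. \<bar>f x\<bar>) ` A)"
    using le by (rule bdd_aboveI2)
  then have "\<bar>f x\<bar> \<le> (SUP x\<in>A. \<bar>f x\<bar>)"
    by (rule cSUP_upper[OF x])
  then have "0 \<le> (SUP x\<in>A. \<bar>f x\<bar>)"
    by (rule order_trans[OF abs_ge_zero])
  moreover have "(SUP x\<in>A. \<bar>f x\<bar>) \<le> c"
    using assms by (intro cSUP_least) auto
  ultimately show ?thesis by simp
qed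

lemma abs_ratio_r_S2_le:
  assumes D: "D \<in> Omega n" and "n \<ge> 2"
  shows "\<bar>(r_S2 n D)\<^sup>2 / ((frob n D)\<^sup>2 + real n) - 1\<bar> \<le> 2 / real n"
proof (rule abs_divide_minus_1_le)
  have "(frob n D)\<^sup>2 + real n - 2 \<le> (r_S2 n D)\<^sup>2"
    using r_S2_ge[OF D] \<open>n \<ge> 2\<close> by (intro sqrt_le_D) simp
  moreover have "(r_S2 n D)\<^sup>2 \<le> (frob n D)\<^sup>2 + real n"
    using r_S2_le[OF D] r_S2_nonneg[OF D] by (intro sqrt_ge_absD) simp
  ultimately show "\<bar>(r_S2 n D)\<^sup>2 - ((frob n D)\<^sup>2 + real n)\<bar> \<le> 2"
    by linarith
qed (use \<open>n \<ge> 2\<close> in auto)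

theorem mainTheorem4:
  shows "(\<forall>n::nat. n \<ge> 1 \<longrightarrow> (\<forall>D\<in>Omega n.
            sqrt ((frob n D)\<^sup>2 + real n - 2) \<le> r_S2 n D \<and>
            r_S2 n D \<le> sqrt ((frob n D)\<^sup>2 + real n)))
       \<and> (\<lambda>n. SUP D\<in>Omega n. \<bar>(r_S2 n D)\<^sup>2 / ((frob n D)\<^sup>2 + real n) - 1\<bar>) \<longlonglongrightarrow> 0"
proof
  show "\<forall>n::nat. n \<ge> 1 \<longrightarrow> (\<forall>D\<in>Omega n.
            sqrt ((frob n D)\<^sup>2 + real n - 2) \<le> r_S2 n D \<and>
            r_S2 n D \<le> sqrt ((frob n D)\<^sup>2 + real n))"
    using r_S2_ge r_S2_le by blast
  have "\<forall>\<^sub>F n in sequentially.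
      norm (SUP D\<in>Omega n. \<bar>(r_S2 n D)\<^sup>2 / ((frob n D)\<^sup>2 + real n) - 1\<bar>) \<le> 2 / real n"
    using eventually_ge_at_top[of 2] unfolding real_norm_def
    by eventually_elim (rule abs_SUP_abs_le[OF Omega_nonempty abs_ratio_r_S2_le])
  then show "(\<lambda>n. SUP D\<in>Omega n. \<bar>(r_S2 n D)\<^sup>2 / ((frob n D)\<^sup>2 + real n) - 1\<bar>) \<longlonglongrightarrow> 0"
    by (rule Lim_null_comparison[OF _ lim_const_over_n])
qed

end
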